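(* Suppose $\mathcal{D}(\cdot)$ is a location-scale family on a convex set $\Theta\subseteq\mathbb{R}^d$, $z_\theta\sim\mathcal{D}(\theta)\iff z_\theta\overset{d}{=}(\Sigma_0+\Sigma(\theta))z_0+\mu_0+\mu\theta$, such that $\Sigma_0+\Sigma(\theta)$ has full rank for all $\theta\in\Theta$. Then $\mathcal{D}(\alpha\theta+(1-\alpha)\theta')\leq_{cx}\alpha\mathcal{D}(\theta)+(1-\alpha)\mathcal{D}(\theta')$ for all $\theta,\theta'\in\Theta$ and $\alpha\in(0,1)$.
   Context: Location-scale family: $z_0\sim\mathcal{D}_0$ is drawn from a fixed zero-mean distribution $\mathcal{D}_0$ on $\mathbb{R}^m$, $\Sigma_0\in\mathbb{R}^{m\times m}$, $\mu_0\in\mathbb{R}^m$ fixed, $\mu:\mathbb{R}^d\to\mathbb{R}^m$ and $\Sigma:\mathbb{R}^d\to\mathbb{R}^{m\times m}$ linear maps. For distributions $\mathcal{D}_1,\mathcal{D}_2$ on $\mathbb{R}^m$, $\mathcal{D}_1\leq_{cx}\mathcal{D}_2$ means $\mathbb{E}_{z\sim\mathcal{D}_1}g(z)\leq\mathbb{E}_{z\sim\mathcal{D}_2}g(z)$ for every convex $g:\mathbb{R}^m\to\mathbb{R}$. $\alpha\mathcal{D}(\theta)+(1-\alpha)\mathcal{D}(\theta')$ denotes the mixture distribution. *)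

theory Defs
  imports "HOL-Probability.Probability"
begin

text \<open>Extended-real expectation of a real function: positive part minus negative part.
  For convex g and distributions with finite mean this is well defined in (-inf, +inf].\<close>
definition ext_expect :: "'a measure \<Rightarrow> ('a \<Rightarrow> real) \<Rightarrow> ereal" where
  "ext_expect M g =
     enn2ereal (\<integral>\<^sup>+ x. ennreal (g x) \<partial>M) - enn2ereal (\<integral>\<^sup>+ x. ennreal (- g x) \<partial>M)"

definition cx_le :: "('a::real_vector) measure \<Rightarrow> 'a measure \<Rightarrow> bool" where
  "cx_le M N \<longleftrightarrow> (\<forall>g::'a \<Rightarrow> real. convex_on UNIV g \<longrightarrow> ext_expect M g \<le> ext_expect N g)"

definition mixture :: "real \<Rightarrow> 'a measure \<Rightarrow> 'a measure \<Rightarrow> 'a measure" where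
  "mixture a M N = measure_of (space M) (sets M)
     (\<lambda>A. ennreal a * emeasure M A + ennreal (1 - a) * emeasure N A)"

definition loc_scale ::
  "(real^'m) measure \<Rightarrow> real^'m^'m \<Rightarrow> (real^'d \<Rightarrow> real^'m^'m) \<Rightarrow> real^'m \<Rightarrow> (real^'d \<Rightarrow> real^'m)
   \<Rightarrow> real^'d \<Rightarrow> (real^'m) measure" where
  "loc_scale D0 Sigma0 Sig mu0 mu \<theta> =
     distr D0 borel (\<lambda>z. (Sigma0 + Sig \<theta>) *v z + mu0 + mu \<theta>)"

end

theory Submission
  imports Defs
begin

text \<open>Couple the distributions through one sample \<open>z\<^sub>0\<close>: since
  \<open>\<theta> \<mapsto> (\<Sigma>\<^sub>0 + \<Sigma>(\<theta>)) z\<^sub>0 + \<mu>\<^sub>0 + \<mu>\<theta>\<close> is affine, the sample for \<open>\<alpha>\<theta> + (1-\<alpha>)\<theta>'\<close> is the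
  convex combination of the samples for \<open>\<theta>\<close> and \<open>\<theta>'\<close>, so for convex \<open>g\<close> Jensen's inequality
  holds pointwise in \<open>z\<^sub>0\<close>. Integrating it gives the convex order, because integrating against a
  mixture mixes the integrals. Integrability of \<open>z\<^sub>0\<close> is needed only because a convex function
  has an affine minorant, which keeps every expectation away from \<open>\<infinity> - \<infinity>\<close>.\<close>

lemma sets_mixture [simp, measurable_cong]: "sets (mixture a M N) = sets M"
  by (simp add: mixture_def)

lemma space_mixture [simp]: "space (mixture a M N) = space M"
  by (simp add: mixture_def)

lemma emeasure_mixture:
  assumes "sets N = sets M" "A \<in> sets M"
  shows "emeasure (mixture a M N) A = ennreal a * emeasure M A + ennreal (1 - a) * emeasure N A"
  unfolding mixture_def
proof (rule emeasure_measure_of_sigma)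
  show "countably_additive (sets M) (\<lambda>A. ennreal a * emeasure M A + ennreal (1 - a) * emeasure N A)"
  proof (rule countably_additiveI)
    fix A :: "nat \<Rightarrow> _"
    assume "range A \<subseteq> sets M" "disjoint_family A" "\<Union> (range A) \<in> sets M"
    then show "(\<Sum>i. ennreal a * emeasure M (A i) + ennreal (1 - a) * emeasure N (A i)) =
        ennreal a * emeasure M (\<Union> (range A)) + ennreal (1 - a) * emeasure N (\<Union> (range A))"
      using assms(1) by (simp add: suminf_add[symmetric] suminf_emeasure)
  qed
qed (use assms in \<open>auto simp: positive_def sets.sigma_algebra_axioms\<close>)

lemma nn_integral_mixture:
  assumes MN: "sets N = sets M" and f: "f \<in> borel_measurable M"
  shows "(\<integral>\<^sup>+ x. f x \<partial>mixture a M N) = ennreal a * (\<integral>\<^sup>+ x. f x \<partial>M) + ennreal (1 - a) * (\<integral>\<^sup>+ x. f x \<partial>N)"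
  using f
proof induction
  case (cong f g)
  moreover have "space N = space M"
    using MN by (rule sets_eq_imp_space_eq)
  ultimately show ?case
    by (simp cong: nn_integral_cong_simp)
next
  case (set A)
  then show ?case
    using MN by (simp add: emeasure_mixture)
next
  case (mult f c)
  then show ?case
    using MN by (simp add: nn_integral_cmult algebra_simps)
next
  case (add f g)
  then show ?case
    using MN by (simp add: nn_integral_add algebra_simps)
next
  case (seq U)
  have "incseq (\<lambda>i. ennreal a * (\<integral>\<^sup>+ x. U i x \<partial>M))" "incseq (\<lambda>i. ennreal (1 - a) * (\<integral>\<^sup>+ x. U i x \<partial>N))"
    using seq MN by (auto simp: incseq_def le_fun_def intro!: mult_left_mono nn_integral_mono)
  with seq MN show ?case
    by (simp add: SUP_apply[abs_def] nn_integral_monotone_convergence_SUP ennreal_SUP_add SUP_mult_left_ennreal)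
qed

lemma convex_on_affine_minorant:
  fixes g :: "'a::euclidean_space \<Rightarrow> real"
  assumes g: "convex_on UNIV g"
  obtains c d where "\<And>x. c \<bullet> x + d \<le> g x"
proof -
  let ?E = "epigraph UNIV g"
  have cont: "continuous_on UNIV g"
    using convex_on_continuous[OF open_UNIV g] .
  have "?E = {xy. g (fst xy) - snd xy \<le> 0}"
    by (auto simp: epigraph_def)
  moreover have "closed {xy :: 'a \<times> real. g (fst xy) - snd xy \<le> 0}"
    by (intro closed_Collect_le continuous_intros continuous_on_compose2[OF cont]) auto
  ultimately have "closed ?E"
    by simp
  moreover have "convex ?E"
    using g by (rule convex_epigraphI)
  moreover have "(0, g 0 - 1) \<notin> ?E"
    by (simp add: mem_epigraph)
  \<comment> \<open>The separating hyperplane is not vertical since it passes below \<open>(0, g 0)\<close>.\<close>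
  ultimately obtain u t b where sep: "(u, t) \<bullet> (0 :: 'a, g 0 - 1) < b" "\<forall>p\<in>?E. b < (u, t) \<bullet> p"
    by (metis separating_hyperplane_closed_point surj_pair)
  have above: "b < u \<bullet> x + t * g x" for x
    using sep(2)[rule_format, of "(x, g x)"] by (simp add: mem_epigraph)
  have "0 < t"
    using sep(1) above[of 0] by (simp add: algebra_simps)
  show thesis
  proof (rule that[of "- (1 / t) *\<^sub>R u" "b / t"])
    show "(- (1 / t) *\<^sub>R u) \<bullet> x + b / t \<le> g x" for x
      using above[of x] \<open>0 < t\<close> by (simp add: field_simps)
  qed
qed

lemma nn_integral_neg_convex_lt_top:
  fixes g :: "'a::euclidean_space \<Rightarrow> real" and X :: "'b \<Rightarrow> 'a"
  assumes "finite_measure M" "integrable M X" "convex_on UNIV g"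
  shows "(\<integral>\<^sup>+ z. ennreal (- g (X z)) \<partial>M) < \<infinity>"
proof -
  interpret finite_measure M by fact
  obtain c d where cd: "\<And>x. c \<bullet> x + d \<le> g x"
    using convex_on_affine_minorant[OF assms(3)] by blast
  have "(\<integral>\<^sup>+ z. ennreal (- g (X z)) \<partial>M) \<le> (\<integral>\<^sup>+ z. ennreal (norm (c \<bullet> X z + d)) \<partial>M)"
    using cd by (intro nn_integral_mono ennreal_leI) (smt (verit) real_norm_def)
  also have "\<dots> < \<infinity>"
  proof -
    have "integrable M (\<lambda>z. c \<bullet> X z + d)"
      using assms(2) by (intro Bochner_Integration.integrable_add integrable_inner_right integrable_const)
    then show ?thesis
      by (simp add: integrable_iff_bounded)
  qed
  finally show ?thesis .
qed

lemma ennreal_pos_neg_le_convex_comb: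
  fixes u v w a b :: real
  assumes "u \<le> a * v + b * w" "0 \<le> a" "0 \<le> b"
  shows "ennreal u + ennreal a * ennreal (- v) + ennreal b * ennreal (- w)
     \<le> ennreal (- u) + ennreal a * ennreal v + ennreal b * ennreal w"
proof -
  have pos_part: "ennreal (max x 0 + a * max y 0 + b * max z 0) =
      ennreal x + ennreal a * ennreal y + ennreal b * ennreal z" for x y z
    using assms(2,3) by (simp add: ennreal_mult)
  have "max u 0 + a * max (- v) 0 + b * max (- w) 0 \<le> max (- u) 0 + a * max v 0 + b * max w 0"
  proof -
    have "u = max u 0 - max (- u) 0" "a * v = a * max v 0 - a * max (- v) 0"
      "b * w = b * max w 0 - b * max (- w) 0"
      by (auto simp: max_def algebra_simps)
    then show ?thesis
      using assms(1) by linarith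
  qed
  then show ?thesis
    unfolding pos_part[symmetric] by (rule ennreal_leI)
qed

lemma enn2ereal_diff_le_diff:
  fixes P N P' N' :: ennreal
  assumes "N < \<infinity>" "N' < \<infinity>" "P + N' \<le> N + P'"
  shows "enn2ereal P - enn2ereal N \<le> enn2ereal P' - enn2ereal N'"
proof -
  have "enn2ereal P + enn2ereal N' \<le> enn2ereal N + enn2ereal P'"
    using assms(3) by (simp add: plus_ennreal.rep_eq[symmetric] less_eq_ennreal.rep_eq[symmetric])
  moreover have "\<bar>enn2ereal N\<bar> \<noteq> \<infinity>" "\<bar>enn2ereal N'\<bar> \<noteq> \<infinity>"
    using assms(1,2) by (simp_all add: less_top)
  ultimately show ?thesis
    by (metis add.commute ereal_diff_add_assoc2 ereal_le_minus ereal_minus_le)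
qed

lemma ext_expect_distr:
  assumes "X \<in> M \<rightarrow>\<^sub>M borel" "g \<in> borel_measurable borel"
  shows "ext_expect (distr M borel X) g =
    enn2ereal (\<integral>\<^sup>+ z. ennreal (g (X z)) \<partial>M) - enn2ereal (\<integral>\<^sup>+ z. ennreal (- g (X z)) \<partial>M)"
  using assms by (simp add: ext_expect_def nn_integral_distr)

lemma ext_expect_mixture:
  assumes "sets N = sets M" "g \<in> borel_measurable M"
  shows "ext_expect (mixture a M N) g =
    enn2ereal (ennreal a * (\<integral>\<^sup>+ x. ennreal (g x) \<partial>M) + ennreal (1 - a) * (\<integral>\<^sup>+ x. ennreal (g x) \<partial>N)) -
    enn2ereal (ennreal a * (\<integral>\<^sup>+ x. ennreal (- g x) \<partial>M) + ennreal (1 - a) * (\<integral>\<^sup>+ x. ennreal (- g x) \<partial>N))"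
  using assms by (simp add: ext_expect_def nn_integral_mixture)

lemma ext_expect_distr_le_mixture:
  assumes meas: "X \<in> M \<rightarrow>\<^sub>M borel" "Y \<in> M \<rightarrow>\<^sub>M borel" "Z \<in> M \<rightarrow>\<^sub>M borel"
    and g: "g \<in> borel_measurable borel"
    and a: "0 \<le> a" "a \<le> 1"
    and le: "\<And>z. z \<in> space M \<Longrightarrow> g (X z) \<le> a * g (Y z) + (1 - a) * g (Z z)"
    and fin: "(\<integral>\<^sup>+ z. ennreal (- g (X z)) \<partial>M) < \<infinity>" "(\<integral>\<^sup>+ z. ennreal (- g (Y z)) \<partial>M) < \<infinity>"
      "(\<integral>\<^sup>+ z. ennreal (- g (Z z)) \<partial>M) < \<infinity>"
  shows "ext_expect (distr M borel X) g \<le> ext_expect (mixture a (distr M borel Y) (distr M borel Z)) g"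
proof -
  define pos where "pos V = (\<integral>\<^sup>+ z. ennreal (g (V z)) \<partial>M)" for V
  define neg where "neg V = (\<integral>\<^sup>+ z. ennreal (- g (V z)) \<partial>M)" for V
  have [measurable]: "(\<lambda>z. g (V z)) \<in> borel_measurable M" if "V \<in> M \<rightarrow>\<^sub>M borel" for V
    using that g by measurable
  have "pos X + (ennreal a * neg Y + ennreal (1 - a) * neg Z) =
      (\<integral>\<^sup>+ z. ennreal (g (X z)) + ennreal a * ennreal (- g (Y z)) + ennreal (1 - a) * ennreal (- g (Z z)) \<partial>M)"
    using meas by (simp add: pos_def neg_def nn_integral_add nn_integral_cmult add.assoc)
  also have "\<dots> \<le> (\<integral>\<^sup>+ z. ennreal (- g (X z)) + ennreal a * ennreal (g (Y z)) + ennreal (1 - a) * ennreal (g (Z z)) \<partial>M)"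
    using le a by (intro nn_integral_mono ennreal_pos_neg_le_convex_comb) auto
  also have "\<dots> = neg X + (ennreal a * pos Y + ennreal (1 - a) * pos Z)"
    using meas by (simp add: pos_def neg_def nn_integral_add nn_integral_cmult add.assoc)
  finally have "pos X + (ennreal a * neg Y + ennreal (1 - a) * neg Z) \<le>
      neg X + (ennreal a * pos Y + ennreal (1 - a) * pos Z)" .
  then have "enn2ereal (pos X) - enn2ereal (neg X) \<le>
      enn2ereal (ennreal a * pos Y + ennreal (1 - a) * pos Z) - enn2ereal (ennreal a * neg Y + ennreal (1 - a) * neg Z)"
    using fin by (intro enn2ereal_diff_le_diff) (auto simp: neg_def ennreal_mult_less_top)
  then show ?thesis
    using meas g by (simp add: ext_expect_distr ext_expect_mixture pos_def neg_def nn_integral_distr)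
qed

lemma cx_le_distr_mixture:
  fixes X Y Z :: "'b \<Rightarrow> 'a::euclidean_space"
  assumes "finite_measure M" "integrable M X" "integrable M Y" "integrable M Z"
    and "0 \<le> a" "a \<le> 1"
    and comb: "\<And>z. z \<in> space M \<Longrightarrow> X z = a *\<^sub>R Y z + (1 - a) *\<^sub>R Z z"
  shows "cx_le (distr M borel X) (mixture a (distr M borel Y) (distr M borel Z))"
  unfolding cx_le_def
proof (intro allI impI)
  fix g :: "'a \<Rightarrow> real"
  assume g: "convex_on UNIV g"
  have "g \<in> borel_measurable borel"
    using convex_on_continuous[OF open_UNIV g] by (rule borel_measurable_continuous_onI)
  moreover have "g (X z) \<le> a * g (Y z) + (1 - a) * g (Z z)" if "z \<in> space M" for z
    using convex_onD[OF g, of "1 - a" "Y z" "Z z"] comb[OF that] assms(5,6) by simp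
  ultimately show "ext_expect (distr M borel X) g \<le> ext_expect (mixture a (distr M borel Y) (distr M borel Z)) g"
    using assms(1-6) g
    by (intro ext_expect_distr_le_mixture nn_integral_neg_convex_lt_top) auto
qed

theorem propositionA1:
  fixes D0 :: "(real^'m) measure"
    and Sigma0 :: "real^'m^'m" and Sig :: "real^'d \<Rightarrow> real^'m^'m"
    and mu0 :: "real^'m" and mu :: "real^'d \<Rightarrow> real^'m"
    and \<Theta> :: "(real^'d) set"
  assumes "prob_space D0"
    and "sets D0 = sets borel"
    and "integrable D0 (\<lambda>z. z)"
    and "(\<integral>z. z \<partial>D0) = 0"
    and "linear Sig" and "linear mu"
    and "convex \<Theta>"
    and "\<And>\<theta>. \<theta> \<in> \<Theta> \<Longrightarrow> invertible (Sigma0 + Sig \<theta>)"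
    and "\<theta> \<in> \<Theta>" and "\<theta>' \<in> \<Theta>" and "0 < \<alpha>" and "\<alpha> < 1"
  shows "cx_le (loc_scale D0 Sigma0 Sig mu0 mu (\<alpha> *\<^sub>R \<theta> + (1 - \<alpha>) *\<^sub>R \<theta>'))
           (mixture \<alpha> (loc_scale D0 Sigma0 Sig mu0 mu \<theta>) (loc_scale D0 Sigma0 Sig mu0 mu \<theta>'))"
proof -
  interpret prob_space D0 by fact
  define f where "f t z = (Sigma0 + Sig t) *v z + mu0 + mu t" for t z
  have "integrable D0 (f t)" for t
    unfolding f_def using assms(3)
    by (intro Bochner_Integration.integrable_add integrable_const
        integrable_bounded_linear[OF matrix_vector_mul_bounded_linear])
  moreover have "f (\<alpha> *\<^sub>R \<theta> + (1 - \<alpha>) *\<^sub>R \<theta>') z = \<alpha> *\<^sub>R f \<theta> z + (1 - \<alpha>) *\<^sub>R f \<theta>' z" for z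
  proof -
    have linear_comb: "Sig (\<alpha> *\<^sub>R \<theta> + (1 - \<alpha>) *\<^sub>R \<theta>') = \<alpha> *\<^sub>R Sig \<theta> + (1 - \<alpha>) *\<^sub>R Sig \<theta>'"
      "mu (\<alpha> *\<^sub>R \<theta> + (1 - \<alpha>) *\<^sub>R \<theta>') = \<alpha> *\<^sub>R mu \<theta> + (1 - \<alpha>) *\<^sub>R mu \<theta>'"
      using assms(5,6) by (simp_all add: linear_add linear_cmul)
    show ?thesis
      unfolding f_def linear_comb
      by (simp add: scaleR_matrix_vector_assoc[symmetric] algebra_simps)
  qed
  ultimately show ?thesis
    unfolding loc_scale_def f_def[symmetric]
    using assms(11,12) by (intro cx_le_distr_mixture) (auto intro: finite_measure_axioms)
qed

end
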